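(* Let $G$ be a group with identity $\varepsilon$ and $R$ a commutative ring with identity. Then the $R$-algebra homomorphism $\Psi:A\to C_R(Y)$ with $\Psi(P_E)=Q_E$ for every finite $E\subseteq G$ is an isomorphism of algebras, and for every $g\in G$ it restricts to an isomorphism $D_g\cong C_R(Y_g)$.
   Context: $A$ is the commutative $R$-algebra generated by symbols $P_E$, $E$ ranging over finite subsets of $G$, subject to $P_EP_F=P_{E\cup F}$; $P_\emptyset$ is its identity. For $g\in G$, $D_g=\operatorname{span}_R\{P_E: \varepsilon,g\in E\}$. $Y=\prod_{g\in G}\{0,1\}$ with the product topology (compact Hausdorff), elements written $x=(x_h)_{h\in G}$; $Y_\varepsilon=\{x: x_\varepsilon=1\}$ and $Y_g=\{x\in Y: x_\varepsilon=1=x_g\}$. $C_R(Y)$ is the $R$-algebra of locally constant functions $Y\to R$ (pointwise operations), and $C_R(Y_g)$ the ideal of those vanishing outside $Y_g$. $Q_g:Y\to R$ is the coordinate function $Q_g(x)=x_g$, and $Q_E=\prod_{g\in E}Q_g$ for finite $E$ ($Q_\emptyset=1$). *)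

theory Defs
  imports "HOL-Analysis.Analysis"
begin

text \<open>The algebra A: the commutative R-algebra presented by generators P_E (E a finite
subset of G) with relations P_E P_F = P_(E union F).  This is the semigroup algebra of the
semilattice of finite subsets of G under union; an element is a finite R-linear combination
of the P_E, represented by its coefficient function with finite support on finite sets.\<close>

definition supp :: "('g set \<Rightarrow> 'r::zero) \<Rightarrow> 'g set set" where
  "supp a = {E. a E \<noteq> 0}"

definition A_carrier :: "('g set \<Rightarrow> 'r::comm_ring_1) set" where
  "A_carrier = {a. finite (supp a) \<and> (\<forall>E \<in> supp a. finite E)}"

definition P :: "'g set \<Rightarrow> ('g set \<Rightarrow> 'r::comm_ring_1)" where
  "P E = (\<lambda>F. if F = E then 1 else 0)"

definition A_add :: "('g set \<Rightarrow> 'r::comm_ring_1) \<Rightarrow> ('g set \<Rightarrow> 'r) \<Rightarrow> ('g set \<Rightarrow> 'r)" where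
  "A_add a b = (\<lambda>E. a E + b E)"

definition A_smult :: "'r::comm_ring_1 \<Rightarrow> ('g set \<Rightarrow> 'r) \<Rightarrow> ('g set \<Rightarrow> 'r)" where
  "A_smult c a = (\<lambda>E. c * a E)"

definition A_mult :: "('g set \<Rightarrow> 'r::comm_ring_1) \<Rightarrow> ('g set \<Rightarrow> 'r) \<Rightarrow> ('g set \<Rightarrow> 'r)" where
  "A_mult a b = (\<lambda>H. \<Sum>(E, F) \<in> {(E, F). E \<in> supp a \<and> F \<in> supp b \<and> E \<union> F = H}. a E * b F)"

text \<open>D_g = span_R { P_E : epsilon, g in E }, with epsilon the group identity.\<close>
definition D :: "'g::group_add \<Rightarrow> ('g set \<Rightarrow> 'r::comm_ring_1) set" where
  "D g = {a \<in> A_carrier. \<forall>E \<in> supp a. 0 \<in> E \<and> g \<in> E}"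

text \<open>Y = prod_(g in G) {0,1}; a point x is a function G \<Rightarrow> bool (True = 1),
with the product of discrete topologies.\<close>
definition Ytop :: "('g \<Rightarrow> bool) topology" where
  "Ytop = product_topology (\<lambda>_. discrete_topology (UNIV :: bool set)) UNIV"

definition locally_constant :: "(('g \<Rightarrow> bool) \<Rightarrow> 'r) \<Rightarrow> bool" where
  "locally_constant f \<longleftrightarrow>
     (\<forall>x \<in> topspace Ytop. \<exists>U. openin Ytop U \<and> x \<in> U \<and> (\<forall>y \<in> U. f y = f x))"

definition C_Y :: "(('g \<Rightarrow> bool) \<Rightarrow> 'r) set" where
  "C_Y = {f. locally_constant f}"

text \<open>Y_g = {x : x_epsilon = 1 = x_g}; C_R(Y_g) = locally constant functions vanishing off Y_g.\<close>
definition Y_sub :: "'g::group_add \<Rightarrow> ('g \<Rightarrow> bool) set" where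
  "Y_sub g = {x. x 0 \<and> x g}"

definition C_Ysub :: "'g::group_add \<Rightarrow> (('g \<Rightarrow> bool) \<Rightarrow> 'r::zero) set" where
  "C_Ysub g = {f \<in> C_Y. \<forall>x. x \<notin> Y_sub g \<longrightarrow> f x = 0}"

definition Q1 :: "'g \<Rightarrow> ('g \<Rightarrow> bool) \<Rightarrow> 'r::comm_ring_1" where
  "Q1 g x = (if x g then 1 else 0)"

definition Q :: "'g set \<Rightarrow> ('g \<Rightarrow> bool) \<Rightarrow> 'r::comm_ring_1" where
  "Q E x = (\<Prod>g \<in> E. Q1 g x)"

definition Psi :: "('g set \<Rightarrow> 'r::comm_ring_1) \<Rightarrow> ('g \<Rightarrow> bool) \<Rightarrow> 'r" where
  "Psi a = (\<lambda>x. \<Sum>E \<in> supp a. a E * Q E x)"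

end

theory Submission
  imports Defs
begin

text \<open>A function on \<open>Y\<close> is locally constant iff it depends on finitely many coordinates:
cylinders are open, and by compactness of \<open>Y\<close> finitely many cylinders on which the function is
constant cover \<open>Y\<close>. The homomorphism \<open>\<Psi>\<close> is injective because, evaluated at the indicator of a
minimal set \<open>E\<close> in the support of \<open>a\<close>, \<open>\<Psi> a\<close> picks out exactly the coefficient \<open>a E\<close>. It is
surjective by induction on the finite set of coordinates \<open>f\<close> depends on, using
\<open>f = Q\<^sub>s f(x\<^sub>s:=1) + (1 - Q\<^sub>s) f(x\<^sub>s:=0)\<close>. Multiplying by \<open>P {\<epsilon>, g}\<close>, whose image is the
indicator of \<open>Y\<^sub>g\<close>, restricts everything to \<open>D\<^sub>g\<close> and \<open>C\<^sub>R(Y\<^sub>g)\<close>.\<close>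

definition depends_only_on :: "'i set \<Rightarrow> (('i \<Rightarrow> 'b) \<Rightarrow> 'c) \<Rightarrow> bool" where
  "depends_only_on S f \<longleftrightarrow> (\<forall>x y. (\<forall>i\<in>S. x i = y i) \<longrightarrow> f x = f y)"

section \<open>Locally constant functions on the Cantor cube\<close>

lemma topspace_Ytop [simp]: "topspace Ytop = UNIV"
  unfolding Ytop_def by (auto simp: PiE_def extensional_def)

lemma compact_space_Ytop: "compact_space Ytop"
  unfolding Ytop_def by (simp add: compact_space_product_topology compact_space_discrete_topology)

lemma openin_Ytop_cylinder:
  assumes "finite S"
  shows "openin Ytop {y. \<forall>i\<in>S. y i = x i}"
proof -
  define U where "U = (\<lambda>i. if i \<in> S then {x i} else UNIV)"
  have "{i \<in> UNIV. U i \<noteq> topspace (discrete_topology UNIV)} \<subseteq> S"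
    by (auto simp: U_def)
  then have "finite {i \<in> UNIV. U i \<noteq> topspace (discrete_topology UNIV)}"
    using assms finite_subset by blast
  moreover have "Pi\<^sub>E UNIV U = {y. \<forall>i\<in>S. y i = x i}"
    by (auto simp: U_def PiE_def extensional_def Pi_def; metis singletonD singletonI)
  ultimately show ?thesis
    unfolding Ytop_def openin_product_topology_alt by (intro ballI exI[of _ U]) auto
qed

lemma locally_constant_cylinder_nbhd:
  assumes "locally_constant f"
  shows "\<exists>F. finite F \<and> (\<forall>y. (\<forall>i\<in>F. y i = x i) \<longrightarrow> f y = f x)"
proof -
  obtain U where U: "openin Ytop U" "x \<in> U" "\<forall>y\<in>U. f y = f x"
    using assms unfolding locally_constant_def by auto
  then obtain V where V: "finite {i \<in> UNIV. V i \<noteq> topspace (discrete_topology (UNIV::bool set))}"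
      "x \<in> Pi\<^sub>E UNIV V" "Pi\<^sub>E UNIV V \<subseteq> U"
    unfolding Ytop_def openin_product_topology_alt by blast
  let ?F = "{i \<in> UNIV. V i \<noteq> topspace (discrete_topology (UNIV::bool set))}"
  have "f y = f x" if "\<forall>i\<in>?F. y i = x i" for y
  proof -
    have "y i \<in> V i" for i
      using that V(2) by (cases "V i = UNIV") (auto simp: PiE_def)
    then show ?thesis
      using V(3) U(3) by (auto simp: PiE_def)
  qed
  with V(1) show ?thesis by blast
qed

lemma locally_constant_iff_finite_dependence:
  "locally_constant f \<longleftrightarrow> (\<exists>S. finite S \<and> depends_only_on S f)"
proof
  assume "\<exists>S. finite S \<and> depends_only_on S f"
  then obtain S where "finite S" "depends_only_on S f" by blast
  then show "locally_constant f"
    unfolding locally_constant_def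
  proof (intro ballI)
    fix x :: "'a \<Rightarrow> bool"
    have "openin Ytop {y. \<forall>i\<in>S. y i = x i}"
      using \<open>finite S\<close> by (rule openin_Ytop_cylinder)
    moreover have "\<forall>y\<in>{y. \<forall>i\<in>S. y i = x i}. f y = f x"
      using \<open>depends_only_on S f\<close> by (simp add: depends_only_on_def)
    ultimately show "\<exists>U. openin Ytop U \<and> x \<in> U \<and> (\<forall>y\<in>U. f y = f x)"
      by blast
  qed
next
  assume lc: "locally_constant f"
  have "\<forall>x. \<exists>F. finite F \<and> (\<forall>y. (\<forall>i\<in>F. y i = x i) \<longrightarrow> f y = f x)"
    using locally_constant_cylinder_nbhd[OF lc] by blast
  then obtain F where F: "\<And>x. finite (F x)" "\<And>x y. \<forall>i\<in>F x. y i = x i \<Longrightarrow> f y = f x"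
    by metis
  define B where "B x = {y. \<forall>i\<in>F x. y i = x i}" for x
  have "compactin Ytop (topspace Ytop)"
    using compact_space_Ytop compact_space_def by blast
  moreover have "\<forall>b\<in>range B. openin Ytop b"
    using openin_Ytop_cylinder F(1) B_def by auto
  moreover have "topspace Ytop \<subseteq> \<Union>(range B)"
    by (auto simp: B_def)
  ultimately obtain X where X: "finite X" "UNIV \<subseteq> \<Union>(B ` X)"
    unfolding compactin_def by (metis finite_subset_image topspace_Ytop)
  have "depends_only_on (\<Union>(F ` X)) f"
    unfolding depends_only_on_def
  proof (intro allI impI)
    fix x y :: "'a \<Rightarrow> bool" assume xy: "\<forall>i\<in>\<Union>(F ` X). x i = y i"
    obtain z where "z \<in> X" "x \<in> B z"
      using X(2) by blast
    with xy show "f x = f y"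
      using F(2)[of z x] F(2)[of z y] by (auto simp: B_def)
  qed
  then show "\<exists>S. finite S \<and> depends_only_on S f"
    using X(1) F(1) by blast
qed

lemma Q_eq_indicator: "finite E \<Longrightarrow> Q E x = (if E \<subseteq> {g. x g} then 1 else 0)"
  unfolding Q_def Q1_def by (induction E rule: finite_induct) auto

lemma Q_empty [simp]: "Q {} = (\<lambda>_. 1)"
  by (simp add: Q_def fun_eq_iff)

lemma Q_singleton: "Q {s} x = (if x s then 1 else 0)"
  by (simp add: Q_def Q1_def)

lemma Q_Un: "finite E \<Longrightarrow> finite F \<Longrightarrow> Q (E \<union> F) x = Q E x * Q F x"
  by (simp add: Q_eq_indicator)

lemma depends_only_on_Q: "E \<subseteq> S \<Longrightarrow> depends_only_on S (Q E)"
  unfolding depends_only_on_def Q_def Q1_def by (auto intro!: prod.cong)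

lemma A_carrier_finite_supp: "a \<in> A_carrier \<Longrightarrow> finite (supp a)"
  by (simp add: A_carrier_def)

lemma A_carrier_finite_set: "a \<in> A_carrier \<Longrightarrow> E \<in> supp a \<Longrightarrow> finite E"
  by (simp add: A_carrier_def)

lemma A_carrier_finite_Union_supp: "a \<in> A_carrier \<Longrightarrow> finite (\<Union>(supp a))"
  by (simp add: A_carrier_def)

lemma supp_A_add: "supp (A_add a b) \<subseteq> supp a \<union> supp b"
  by (auto simp: supp_def A_add_def)

lemma supp_A_smult: "supp (A_smult c a) \<subseteq> supp a"
  by (auto simp: supp_def A_smult_def)

lemma supp_P: "supp (P E) \<subseteq> {E}"
  by (auto simp: supp_def P_def)

lemma supp_A_mult: "supp (A_mult a b) \<subseteq> (\<lambda>(E, F). E \<union> F) ` (supp a \<times> supp b)"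
proof
  fix H assume H: "H \<in> supp (A_mult a b)"
  have "{(E, F). E \<in> supp a \<and> F \<in> supp b \<and> E \<union> F = H} \<noteq> {}"
  proof
    assume "{(E, F). E \<in> supp a \<and> F \<in> supp b \<and> E \<union> F = H} = {}"
    then have "A_mult a b H = 0"
      unfolding A_mult_def by (simp only: sum.empty)
    with H show False
      by (simp add: supp_def)
  qed
  then show "H \<in> (\<lambda>(E, F). E \<union> F) ` (supp a \<times> supp b)"
    by auto
qed

lemma A_carrier_iff_subset:
  "a \<in> A_carrier \<longleftrightarrow> (\<exists>T. finite T \<and> (\<forall>E\<in>T. finite E) \<and> supp a \<subseteq> T)"
  unfolding A_carrier_def by (auto intro: finite_subset)

lemma A_add_closed:
  assumes "a \<in> A_carrier" "b \<in> A_carrier"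
  shows "A_add a b \<in> A_carrier"
  unfolding A_carrier_iff_subset using assms supp_A_add[of a b]
  by (intro exI[of _ "supp a \<union> supp b"]) (auto simp: A_carrier_def)

lemma A_smult_closed:
  assumes "a \<in> A_carrier"
  shows "A_smult c a \<in> A_carrier"
  unfolding A_carrier_iff_subset using assms supp_A_smult[of c a]
  by (intro exI[of _ "supp a"]) (auto simp: A_carrier_def)

lemma P_in_A_carrier: "finite E \<Longrightarrow> P E \<in> A_carrier"
  unfolding A_carrier_iff_subset using supp_P[of E] by (intro exI[of _ "{E}"]) auto

lemma A_mult_closed:
  assumes "a \<in> A_carrier" "b \<in> A_carrier"
  shows "A_mult a b \<in> A_carrier"
  unfolding A_carrier_iff_subset
proof (intro exI conjI)
  show "finite ((\<lambda>(E, F). E \<union> F) ` (supp a \<times> supp b))"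
    using assms by (simp add: A_carrier_finite_supp)
  show "\<forall>H\<in>(\<lambda>(E, F). E \<union> F) ` (supp a \<times> supp b). finite H"
    using assms by (auto simp: A_carrier_finite_set)
qed (rule supp_A_mult)

section \<open>\<open>\<Psi>\<close> is an algebra homomorphism\<close>

lemma Psi_eq_sum_superset: "finite T \<Longrightarrow> supp a \<subseteq> T \<Longrightarrow> Psi a x = (\<Sum>E\<in>T. a E * Q E x)"
  unfolding Psi_def by (rule sum.mono_neutral_left) (auto simp: supp_def)

lemma Psi_P: "Psi (P E) = Q E"
  using Psi_eq_sum_superset[of "{E}" "P E"] supp_P by (auto simp: P_def)

lemma Psi_A_add:
  assumes "a \<in> A_carrier" "b \<in> A_carrier"
  shows "Psi (A_add a b) = (\<lambda>x. Psi a x + Psi b x)"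
proof
  fix x
  have T: "finite (supp a \<union> supp b)"
    using assms by (simp add: A_carrier_finite_supp)
  have "Psi (A_add a b) x = (\<Sum>E\<in>supp a \<union> supp b. A_add a b E * Q E x)"
    by (rule Psi_eq_sum_superset[OF T supp_A_add])
  also have "\<dots> = (\<Sum>E\<in>supp a \<union> supp b. a E * Q E x) + (\<Sum>E\<in>supp a \<union> supp b. b E * Q E x)"
    by (simp add: A_add_def sum.distrib distrib_right)
  also have "\<dots> = Psi a x + Psi b x"
    using Psi_eq_sum_superset[OF T, of a] Psi_eq_sum_superset[OF T, of b] by simp
  finally show "Psi (A_add a b) x = Psi a x + Psi b x" .
qed

lemma Psi_A_smult:
  assumes "a \<in> A_carrier"
  shows "Psi (A_smult c a) = (\<lambda>x. c * Psi a x)"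
proof
  fix x
  have T: "finite (supp a)"
    using assms by (rule A_carrier_finite_supp)
  have "Psi (A_smult c a) x = (\<Sum>E\<in>supp a. A_smult c a E * Q E x)"
    by (rule Psi_eq_sum_superset[OF T supp_A_smult])
  then show "Psi (A_smult c a) x = c * Psi a x"
    by (simp add: Psi_def A_smult_def sum_distrib_left mult.assoc)
qed

lemma Psi_A_mult:
  assumes a: "a \<in> A_carrier" and b: "b \<in> A_carrier"
  shows "Psi (A_mult a b) = (\<lambda>x. Psi a x * Psi b x)"
proof
  fix x
  let ?S = "supp a \<times> supp b"
  let ?u = "\<lambda>(E, F). E \<union> F"
  have fS: "finite ?S"
    using a b by (simp add: A_carrier_finite_supp)
  have "Psi (A_mult a b) x = (\<Sum>H\<in>?u ` ?S. A_mult a b H * Q H x)"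
    using fS by (intro Psi_eq_sum_superset supp_A_mult) auto
  also have "\<dots> = (\<Sum>H\<in>?u ` ?S. \<Sum>p\<in>{p \<in> ?S. ?u p = H}. a (fst p) * b (snd p) * Q (?u p) x)"
  proof (rule sum.cong[OF refl])
    fix H
    have "{(E, F). E \<in> supp a \<and> F \<in> supp b \<and> E \<union> F = H} = {p \<in> ?S. ?u p = H}"
      by auto
    then show "A_mult a b H * Q H x = (\<Sum>p\<in>{p \<in> ?S. ?u p = H}. a (fst p) * b (snd p) * Q (?u p) x)"
      unfolding A_mult_def sum_distrib_right by (intro sum.cong) auto
  qed
  also have "\<dots> = (\<Sum>p\<in>?S. a (fst p) * b (snd p) * Q (?u p) x)"
    using fS by (intro sum.group) auto
  also have "\<dots> = (\<Sum>p\<in>?S. (a (fst p) * Q (fst p) x) * (b (snd p) * Q (snd p) x))"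
    using a b by (intro sum.cong refl) (auto simp: Q_Un A_carrier_finite_set ac_simps)
  also have "\<dots> = Psi a x * Psi b x"
    unfolding Psi_def sum_product sum.cartesian_product by (simp add: split_beta)
  finally show "Psi (A_mult a b) x = Psi a x * Psi b x" .
qed

section \<open>\<open>\<Psi>\<close> is bijective\<close>

lemma Psi_eq_zero_imp_zero:
  assumes a: "a \<in> A_carrier" and zero: "Psi a = (\<lambda>_. 0)"
  shows "a = (\<lambda>_. 0)"
proof (rule ccontr)
  assume "a \<noteq> (\<lambda>_. 0)"
  then have "supp a \<noteq> {}"
    by (auto simp: supp_def)
  then obtain E where E: "E \<in> supp a" "\<And>F. F \<in> supp a \<Longrightarrow> F \<subseteq> E \<Longrightarrow> F = E"
    using finite_has_minimal[OF A_carrier_finite_supp[OF a]] by (metis order_le_less)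
  let ?x = "\<lambda>g. g \<in> E"
  have "Psi a ?x = a E * Q E ?x + (\<Sum>F\<in>supp a - {E}. a F * Q F ?x)"
    unfolding Psi_def using sum.remove[OF A_carrier_finite_supp[OF a] E(1)] .
  also have "(\<Sum>F\<in>supp a - {E}. a F * Q F ?x) = 0"
    using E(2) a by (intro sum.neutral) (auto simp: Q_eq_indicator A_carrier_finite_set)
  also have "Q E ?x = 1"
    using A_carrier_finite_set[OF a E(1)] by (simp add: Q_eq_indicator)
  finally have "Psi a ?x = a E"
    by simp
  with zero E(1) show False
    by (simp add: supp_def)
qed

lemma inj_on_Psi: "inj_on Psi A_carrier"
proof (rule inj_onI)
  fix a b assume a: "a \<in> A_carrier" and b: "b \<in> A_carrier" and eq: "Psi a = Psi b"
  let ?d = "A_add a (A_smult (-1) b)"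
  have "?d \<in> A_carrier"
    using a b by (simp add: A_add_closed A_smult_closed)
  moreover have "Psi ?d = (\<lambda>_. 0)"
    using eq by (simp add: Psi_A_add[OF a A_smult_closed[OF b]] Psi_A_smult[OF b])
  ultimately have "?d = (\<lambda>_. 0)"
    by (rule Psi_eq_zero_imp_zero)
  then have "a E - b E = 0" for E
    by (simp add: A_add_def A_smult_def fun_eq_iff)
  then show "a = b"
    by (auto simp: fun_eq_iff)
qed

lemma Psi_in_C_Y:
  fixes a :: "'g set \<Rightarrow> 'r::comm_ring_1"
  assumes "a \<in> A_carrier"
  shows "Psi a \<in> C_Y"
proof -
  have "depends_only_on (\<Union>(supp a)) (Psi a)"
    unfolding depends_only_on_def
  proof (intro allI impI)
    fix x y :: "'g \<Rightarrow> bool" assume xy: "\<forall>i\<in>\<Union>(supp a). x i = y i"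
    have "Q E x = (Q E y :: 'r)" if "E \<in> supp a" for E
      using depends_only_on_Q[of E "\<Union>(supp a)"] that xy unfolding depends_only_on_def by blast
    then show "Psi a x = Psi a y"
      unfolding Psi_def by (intro sum.cong) auto
  qed
  then show ?thesis
    using assms unfolding C_Y_def locally_constant_iff_finite_dependence
    by (blast dest: A_carrier_finite_Union_supp)
qed

lemma split_at_coordinate:
  "f x = Q {s} x * f (x(s := True)) + (1 - Q {s} x) * f (x(s := False))"
  by (cases "x s") (simp_all add: Q_singleton fun_upd_idem)

lemma Psi_surj_finite_dependence:
  fixes f :: "('g \<Rightarrow> bool) \<Rightarrow> 'r::comm_ring_1"
  assumes "finite S" "depends_only_on S f"
  shows "\<exists>a\<in>A_carrier. Psi a = f"
  using assms
proof (induction S arbitrary: f rule: finite_induct)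
  case empty
  then have "f = (\<lambda>_. f (\<lambda>_. False))"
    by (auto simp: depends_only_on_def)
  then have "Psi (A_smult (f (\<lambda>_. False)) (P {})) = f"
    by (simp add: Psi_A_smult P_in_A_carrier Psi_P)
  then show ?case
    by (blast intro: A_smult_closed P_in_A_carrier)
next
  case (insert s S)
  have "depends_only_on S (\<lambda>x. f (x(s := v)))" for v
    using insert.prems unfolding depends_only_on_def by simp
  then obtain a1 a0 where a1: "a1 \<in> A_carrier" "Psi a1 = (\<lambda>x. f (x(s := True)))"
    and a0: "a0 \<in> A_carrier" "Psi a0 = (\<lambda>x. f (x(s := False)))"
    using insert.IH by meson
  have Ps: "(P {s} :: 'g set \<Rightarrow> 'r) \<in> A_carrier" and P0: "(P {} :: 'g set \<Rightarrow> 'r) \<in> A_carrier"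
    by (simp_all add: P_in_A_carrier)
  let ?not_s = "A_add (P {}) (A_smult (-1) (P {s})) :: 'g set \<Rightarrow> 'r"
  have not_s: "?not_s \<in> A_carrier"
    using Ps P0 by (intro A_add_closed A_smult_closed)
  have Psi_not_s: "Psi ?not_s = (\<lambda>x. 1 - Q {s} x)"
    using Ps P0 by (simp add: A_smult_closed Psi_A_add Psi_A_smult Psi_P)
  let ?a = "A_add (A_mult (P {s}) a1) (A_mult ?not_s a0)"
  have a: "?a \<in> A_carrier"
    using Ps P0 a1(1) a0(1) by (simp add: A_add_closed A_mult_closed A_smult_closed)
  have "Psi ?a = (\<lambda>x. Psi (P {s}) x * Psi a1 x + Psi ?not_s x * Psi a0 x)"
    using Ps not_s a1(1) a0(1) by (simp add: Psi_A_add A_mult_closed Psi_A_mult)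
  also have "\<dots> = (\<lambda>x. Q {s} x * f (x(s := True)) + (1 - Q {s} x) * f (x(s := False)))"
    by (simp only: Psi_P Psi_not_s a1(2) a0(2))
  also have "\<dots> = f"
    by (rule ext) (rule split_at_coordinate[symmetric])
  finally show ?case
    using a by blast
qed

lemma bij_betw_Psi: "bij_betw Psi A_carrier C_Y"
  unfolding bij_betw_def
proof (intro conjI inj_on_Psi equalityI subsetI)
  show "f \<in> C_Y" if "f \<in> Psi ` A_carrier" for f
    using that Psi_in_C_Y by blast
  show "f \<in> Psi ` A_carrier" if "f \<in> C_Y" for f
    using that Psi_surj_finite_dependence
    unfolding C_Y_def locally_constant_iff_finite_dependence by blast
qed

section \<open>Restriction to \<open>D\<^sub>g\<close>\<close>

lemma A_mult_P_in_D:
  assumes "a \<in> A_carrier"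
  shows "A_mult a (P {0, g}) \<in> D g"
proof -
  have "0 \<in> H \<and> g \<in> H" if "H \<in> supp (A_mult a (P {0, g}))" for H
    using that supp_A_mult[of a "P {0, g}"] supp_P[of "{0, g}"] by blast
  then show ?thesis
    using assms unfolding D_def by (simp add: A_mult_closed P_in_A_carrier)
qed

lemma Psi_vanishes_off_Y_sub:
  assumes "a \<in> D g" "x \<notin> Y_sub g"
  shows "Psi a x = 0"
  unfolding Psi_def
proof (intro sum.neutral ballI)
  fix E assume E: "E \<in> supp a"
  then have "finite E" "0 \<in> E" "g \<in> E"
    using assms(1) unfolding D_def by (auto simp: A_carrier_finite_set)
  with assms(2) show "a E * Q E x = 0"
    by (auto simp: Q_eq_indicator Y_sub_def)
qed

lemma bij_betw_Psi_D: "bij_betw Psi (D g :: ('g::group_add set \<Rightarrow> 'r::comm_ring_1) set) (C_Ysub g)"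
  unfolding bij_betw_def
proof (intro conjI equalityI subsetI)
  have D_sub: "D g \<subseteq> A_carrier"
    by (auto simp: D_def)
  then show "inj_on Psi (D g)"
    using inj_on_Psi inj_on_subset by blast
  show "f \<in> C_Ysub g" if "f \<in> Psi ` D g" for f
    using that D_sub Psi_in_C_Y Psi_vanishes_off_Y_sub by (fastforce simp: C_Ysub_def)
  fix f :: "('g \<Rightarrow> bool) \<Rightarrow> 'r" assume f: "f \<in> C_Ysub g"
  then obtain a where a: "a \<in> A_carrier" "Psi a = f"
    using bij_betw_Psi by (force simp: C_Ysub_def bij_betw_def)
  have "Psi (A_mult a (P {0, g})) = (\<lambda>x. f x * Q {0, g} x)"
    using a by (simp add: Psi_A_mult P_in_A_carrier Psi_P)
  also have "\<dots> = f"
    using f by (auto simp: fun_eq_iff C_Ysub_def Y_sub_def Q_eq_indicator)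
  finally show "f \<in> Psi ` D g"
    using A_mult_P_in_D[OF a(1)] by (metis image_eqI)
qed

theorem mainTheorem12:
  shows "(\<forall>E::'g::group_add set. finite E \<longrightarrow> Psi (P E :: 'g set \<Rightarrow> 'r::comm_ring_1) = Q E)
    \<and> (\<forall>a \<in> (A_carrier :: ('g set \<Rightarrow> 'r::comm_ring_1) set). \<forall>b \<in> A_carrier.
          Psi (A_add a b) = (\<lambda>x. Psi a x + Psi b x)
        \<and> Psi (A_mult a b) = (\<lambda>x. Psi a x * Psi b x))
    \<and> (\<forall>c::'r. \<forall>a \<in> (A_carrier :: ('g set \<Rightarrow> 'r::comm_ring_1) set). Psi (A_smult c a) = (\<lambda>x. c * Psi a x))
    \<and> Psi (P {} :: 'g set \<Rightarrow> 'r::comm_ring_1) = (\<lambda>x. 1)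
    \<and> bij_betw Psi (A_carrier :: ('g set \<Rightarrow> 'r::comm_ring_1) set) C_Y
    \<and> (\<forall>g::'g. bij_betw Psi (D g :: ('g set \<Rightarrow> 'r::comm_ring_1) set) (C_Ysub g))"
  by (simp add: Psi_P Psi_A_add Psi_A_mult Psi_A_smult bij_betw_Psi bij_betw_Psi_D)

end
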